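(* Fix the setting described in the context, constants $\varphi_0>0$, $\varphi_1\ge0$, and a probability distribution $\mathbf{q}^{\mathrm{hon}}$ on $\mathcal{C}'$. Define $$r_{\mathrm{best}}=\sup_{g}\big(g(\mathbf{q}^{\mathrm{hon}})-\hat T(\mathbf{g})\big),$$ where the supremum is over all crossover min-tradeoff functions $g(\mathbf{q})=\mathbf{g}\cdot\mathbf{q}+k_g$. Then $$r_{\mathrm{best}}=\inf_{J,\boldsymbol\lambda}\Big\{W(\rho^{g}_J)+\hat T^*(\boldsymbol\lambda)\ :\ \mathbf{q}^{\mathrm{hon}}-\boldsymbol\Phi[\rho^{t}_J]-\boldsymbol\lambda=\mathbf{0}\Big\} =\inf_{J,\boldsymbol\lambda,\boldsymbol\nu}\Big\{W(\rho^{g}_J)+s\Big(\tfrac12\textstyle\sum_c\nu_c\Big)\ :\ \mathbf{q}^{\mathrm{hon}}-\boldsymbol\Phi[\rho^{t}_J]-\boldsymbol\lambda=\mathbf{0},\ -\boldsymbol\nu\le\boldsymbol\lambda\le\boldsymbol\nu\Big\},$$ where $J$ ranges over Choi matrices and $\boldsymbol\lambda,\boldsymbol\nu\in\mathbb{R}^{|\mathcal{C}'|}$ (inequalities componentwise). Furthermore, let $L(\rho,\boldsymbol\nu)$ be an affine function such that $L(\rho^{g}_J,\boldsymbol\nu)\le W(\rho^{g}_J)+s(\frac12\sum_c\nu_c)$ for all Choi matrices $J$ and all $\boldsymbol\nu$, and let $$r_{\mathrm{SDP}}=\inf_{J,\boldsymbol\lambda,\boldsymbol\nu}\Big\{L(\rho^{g}_J,\boldsymbol\nu)\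 :\ \mathbf{q}^{\mathrm{hon}}-\boldsymbol\Phi[\rho^{t}_J]-\boldsymbol\lambda=\mathbf{0},\ -\boldsymbol\nu\le\boldsymbol\lambda\le\boldsymbol\nu\Big\},$$ assumed finite. Then there exists $\mathbf{g}^\star\in\mathbb{R}^{|\mathcal{C}'|}$ (an optimal Lagrange dual variable for the equality constraint) with $$r_{\mathrm{SDP}}=\inf_{(J,\boldsymbol\lambda,\boldsymbol\nu)\in\mathcal{D}'}\Big(L(\rho^{g}_J,\boldsymbol\nu)+\mathbf{g}^\star\cdot\big(\mathbf{q}^{\mathrm{hon}}-\boldsymbol\Phi[\rho^{t}_J]-\boldsymbol\lambda\big)\Big),$$ where $\mathcal{D}'$ is the set of triples with $J$ a Choi matrix and $-\boldsymbol\nu\le\boldsymbol\lambda\le\boldsymbol\nu$; and for any such $\mathbf{g}^\star$ there is a crossover min-tradeoff function $g^\star$ with gradient $\mathbf{g}^\star$ satisfying $$g^\star(\mathbf{q}^{\mathrm{hon}})-\hat T(\mathbf{g}^\star)\ge r_{\mathrm{SDP}}.$$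
   Context: Let $A,A',B$ be finite-dimensional quantum systems and let $\ket{\xi^g},\ket{\xi^t}$ be pure states on $AA'$. A Choi matrix is an operator $J\ge0$ on $A'B$ with $\operatorname{Tr}_B J=\mathbb{1}_{A'}$ (Choi state of a channel $\mathcal{E}:A'\to B$, acting as $\mathcal{E}(X)=\operatorname{Tr}_{A'}[J(X^T\otimes\mathbb{1}_B)]$). For a Choi matrix $J$ define the states on $AB$ $$\rho^{g}_J=\operatorname{Tr}_{A'}\big[(\mathbb{1}_A\otimes J)(\ket{\xi^g}\!\bra{\xi^g}^{T_{A'}}\otimes\mathbb{1}_B)\big],\quad \rho^{t}_J=\operatorname{Tr}_{A'}\big[(\mathbb{1}_A\otimes J)(\ket{\xi^t}\!\bra{\xi^t}^{T_{A'}}\otimes\mathbb{1}_B)\big].$$ $W$ is a real-valued, nonnegative, convex function of states on $AB$. $\mathcal{C}'$ is a finite alphabet, and $\boldsymbol\Phi[\rho]=(\Phi_c[\rho])_{c\in\mathcal{C}'}$ with $\Phi_c[\rho]=\operatorname{Tr}(P_c\rho)$ for a POVM $\{P_c\}_{c\in\mathcal{C}'}$ on $AB$ (so $\boldsymbol\Phi[\rho]$ is a probability distribution). The crossover rate function is $r_{\mathrm{cross}}(\mathbf{q})=\inf\{W(\rho^{g}_J): J \text{ Choi},\ \boldsymbol\Phi[\rho^{t}_J]=\mathbf{q}\}$ (infimum of the empty set is $+\infty$). A crossover min-tradeoff function is an affine function $g(\mathbf{q})=\mathbf{g}\cdot\mathbf{q}+k_g$ ($\mathbf{g}\in\mathbb{R}^{|\mathcal{C}'|}$,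 $k_g\in\mathbb{R}$) with $g(\mathbf{q})\le r_{\mathrm{cross}}(\mathbf{q})$ for every probability distribution $\mathbf{q}$ on $\mathcal{C}'$. For $\varphi_0>0,\varphi_1\ge0$: $\hat T(\mathbf{g})=\varphi_0(\max(\mathbf{g})-\min(\mathbf{g}))^2+\varphi_1(\max(\mathbf{g})-\min(\mathbf{g}))$; $s(x)=(x-\varphi_1)^2/(4\varphi_0)$ if $x\ge\varphi_1$ and $s(x)=0$ otherwise; $\hat T^*(\boldsymbol\lambda)=s(\|\boldsymbol\lambda\|_1/2)$ if $\sum_c\lambda_c=0$ and $+\infty$ otherwise. *)

theory Defs
  imports Complex_Main "HOL-Library.Extended_Real"
begin

text \<open>Operators on a finite-dimensional Hilbert space with orthonormal basis indexed by
  a finite type 'i are represented as complex matrices 'i => 'i => complex.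
  Composite systems use product index types; the tripartite space is A x A' x B.\<close>

type_synonym 'i cmat = "'i \<Rightarrow> 'i \<Rightarrow> complex"
type_synonym 'i cvec = "'i \<Rightarrow> complex"

definition mmul :: "('i::finite) cmat \<Rightarrow> 'i cmat \<Rightarrow> 'i cmat" where
  "mmul M N = (\<lambda>i k. \<Sum>j\<in>UNIV. M i j * N j k)"

definition eye :: "'i cmat" where
  "eye = (\<lambda>i j. if i = j then 1 else 0)"

definition mtrace :: "('i::finite) cmat \<Rightarrow> complex" where
  "mtrace M = (\<Sum>i\<in>UNIV. M i i)"

definition qform :: "('i::finite) cmat \<Rightarrow> 'i cvec \<Rightarrow> complex" where
  "qform M v = (\<Sum>i\<in>UNIV. \<Sum>j\<in>UNIV. cnj (v i) * M i j * v j)"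

definition psd :: "('i::finite) cmat \<Rightarrow> bool" where
  "psd M \<longleftrightarrow> (\<forall>v. Im (qform M v) = 0 \<and> 0 \<le> Re (qform M v))"

definition density :: "('i::finite) cmat \<Rightarrow> bool" where
  "density \<rho> \<longleftrightarrow> psd \<rho> \<and> mtrace \<rho> = 1"

definition pure_state :: "('i::finite) cvec \<Rightarrow> bool" where
  "pure_state v \<longleftrightarrow> (\<Sum>i\<in>UNIV. cmod (v i) ^ 2) = 1"

definition outer :: "'i cvec \<Rightarrow> 'i cmat" where
  "outer v = (\<lambda>i j. v i * cnj (v j))"

definition kron :: "'i cmat \<Rightarrow> 'j cmat \<Rightarrow> ('i \<times> 'j) cmat" where
  "kron M N = (\<lambda>(i, j) (i', j'). M i i' * N j j')"

definition ptranspose2 :: "('i \<times> 'j) cmat \<Rightarrow> ('i \<times> 'j) cmat" where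
  "ptranspose2 M = (\<lambda>(i, j) (i', j'). M (i, j') (i', j))"

definition ptrace2 :: "('i \<times> ('j::finite)) cmat \<Rightarrow> 'i cmat" where
  "ptrace2 M = (\<lambda>i i'. \<Sum>j\<in>UNIV. M (i, j) (i', j))"

definition reassoc :: "(('a \<times> 'x) \<times> 'b) cmat \<Rightarrow> ('a \<times> 'x \<times> 'b) cmat" where
  "reassoc M = (\<lambda>(a, x, b) (a', x', b'). M ((a, x), b) ((a', x'), b'))"

definition ptrace_mid :: "('a \<times> ('x::finite) \<times> 'b) cmat \<Rightarrow> ('a \<times> 'b) cmat" where
  "ptrace_mid M = (\<lambda>(a, b) (a', b'). \<Sum>x\<in>UNIV. M (a, x, b) (a', x, b'))"

definition choi :: "(('x::finite) \<times> ('b::finite)) cmat \<Rightarrow> bool" where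
  "choi J \<longleftrightarrow> psd J \<and> ptrace2 J = eye"

definition rhoJ :: "('a::finite \<times> 'x::finite) cvec \<Rightarrow> ('x \<times> 'b::finite) cmat \<Rightarrow> ('a \<times> 'b) cmat" where
  "rhoJ xi J = ptrace_mid (mmul (kron (eye :: 'a cmat) J)
                                (reassoc (kron (ptranspose2 (outer xi)) (eye :: 'b cmat))))"

text \<open>Phi_c[rho] = Tr(P_c rho) (real for states and POVM elements; we take the real part).\<close>
definition Phi :: "('c \<Rightarrow> ('i::finite) cmat) \<Rightarrow> 'i cmat \<Rightarrow> 'c \<Rightarrow> real" where
  "Phi P \<rho> = (\<lambda>c. Re (mtrace (mmul (P c) \<rho>)))"

definition povm :: "(('c::finite) \<Rightarrow> ('i::finite) cmat) \<Rightarrow> bool" where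
  "povm P \<longleftrightarrow> (\<forall>c. psd (P c)) \<and> (\<lambda>i j. \<Sum>c\<in>UNIV. P c i j) = eye"

definition prob_dist :: "(('c::finite) \<Rightarrow> real) \<Rightarrow> bool" where
  "prob_dist q \<longleftrightarrow> (\<forall>c. 0 \<le> q c) \<and> (\<Sum>c\<in>UNIV. q c) = 1"

definition dotv :: "(('c::finite) \<Rightarrow> real) \<Rightarrow> ('c \<Rightarrow> real) \<Rightarrow> real" where
  "dotv g q = (\<Sum>c\<in>UNIV. g c * q c)"

definition convex_on_states :: "(('i::finite) cmat \<Rightarrow> real) \<Rightarrow> bool" where
  "convex_on_states W \<longleftrightarrow>
     (\<forall>\<rho> \<sigma> t. density \<rho> \<longrightarrow> density \<sigma> \<longrightarrow> 0 \<le> t \<longrightarrow> t \<le> 1 \<longrightarrow>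
        W (\<lambda>i j. complex_of_real t * \<rho> i j + complex_of_real (1 - t) * \<sigma> i j)
          \<le> t * W \<rho> + (1 - t) * W \<sigma>)"

text \<open>Crossover rate function (Inf of empty set = +infinity).\<close>
definition r_cross ::
  "(('a::finite \<times> 'b::finite) cmat \<Rightarrow> real) \<Rightarrow> ('c \<Rightarrow> ('a \<times> 'b) cmat)
   \<Rightarrow> ('a \<times> 'x::finite) cvec \<Rightarrow> ('a \<times> 'x) cvec \<Rightarrow> ('c \<Rightarrow> real) \<Rightarrow> ereal" where
  "r_cross W P xig xit q =
     Inf {ereal (W (rhoJ xig J)) | J :: ('x \<times> 'b) cmat. choi J \<and> Phi P (rhoJ xit J) = q}"

definition cross_mtf ::
  "(('a::finite \<times> 'b::finite) cmat \<Rightarrow> real) \<Rightarrow> ('c::finite \<Rightarrow> ('a \<times> 'b) cmat)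
   \<Rightarrow> ('a \<times> 'x::finite) cvec \<Rightarrow> ('a \<times> 'x) cvec \<Rightarrow> ('c \<Rightarrow> real) \<Rightarrow> real \<Rightarrow> bool" where
  "cross_mtf W P xig xit g k \<longleftrightarrow>
     (\<forall>q. prob_dist q \<longrightarrow> ereal (dotv g q + k) \<le> r_cross W P xig xit q)"

definition T_hat :: "real \<Rightarrow> real \<Rightarrow> (('c::finite) \<Rightarrow> real) \<Rightarrow> real" where
  "T_hat \<phi>0 \<phi>1 g = \<phi>0 * (Max (range g) - Min (range g))^2 + \<phi>1 * (Max (range g) - Min (range g))"

definition s_fun :: "real \<Rightarrow> real \<Rightarrow> real \<Rightarrow> real" where
  "s_fun \<phi>0 \<phi>1 x = (if x \<ge> \<phi>1 then (x - \<phi>1)^2 / (4 * \<phi>0) else 0)"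

definition T_star :: "real \<Rightarrow> real \<Rightarrow> (('c::finite) \<Rightarrow> real) \<Rightarrow> ereal" where
  "T_star \<phi>0 \<phi>1 lam =
     (if (\<Sum>c\<in>UNIV. lam c) = 0 then ereal (s_fun \<phi>0 \<phi>1 ((\<Sum>c\<in>UNIV. \<bar>lam c\<bar>) / 2)) else \<infinity>)"

definition affine_fun :: "('i cmat \<Rightarrow> ('c \<Rightarrow> real) \<Rightarrow> real) \<Rightarrow> bool" where
  "affine_fun L \<longleftrightarrow>
     (\<forall>\<rho>1 \<rho>2 \<nu>1 \<nu>2 (t::real).
        L (\<lambda>i j. complex_of_real t * \<rho>1 i j + complex_of_real (1 - t) * \<rho>2 i j)
          (\<lambda>c. t * \<nu>1 c + (1 - t) * \<nu>2 c)
        = t * L \<rho>1 \<nu>1 + (1 - t) * L \<rho>2 \<nu>2)"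

end

(* Strong duality for the convex programme
     minimise W(rho^g_J) + s(||lambda||_1 / 2)  subject to  q^hon - Phi[rho^t_J] - lambda = 0.
   On vectors lambda with zero sum, T_hat and s(||.||_1 / 2) are a Fenchel pair:
   g . lambda <= T_hat(g) + s(||lambda||_1 / 2), with equality when lambda puts mass +tau on an
   argmax and -tau on an argmin of g.  Applying a crossover min-tradeoff function at the
   distribution q = Phi[rho^t_J] (a distribution because Tr(P_c rho) >= 0 for positive P_c, rho)
   and adding the Fenchel inequality gives weak duality.  Conversely, the constraint map
   (J, lambda) |-> q^hon - Phi[rho^t_J] - lambda is onto, so a hyperplane separating the origin
   from the convex strict epigraph of the objective over the constraint values yields a Lagrange
   multiplier g; the equality case of the Fenchel pair turns g into a crossover min-tradeoff
   function whose value is the primal optimum.  Relaxing |lambda| to nu >= |lambda| does not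
   change the optimum since s is monotone.  For the affine minorant L the same separation gives
   the multiplier g*, and L <= W + s lets the Fenchel argument turn any such g* into a crossover
   min-tradeoff function of value at least r_SDP. *)

theory Submission
  imports Defs "HOL-Analysis.Convex_Euclidean_Space" "HOL-Analysis.Finite_Cartesian_Product"
begin

lemma sum_UNIV_prod:
  "(\<Sum>i\<in>(UNIV::('a::finite \<times> 'b::finite) set). f i) = (\<Sum>a\<in>UNIV. \<Sum>b\<in>UNIV. f (a, b))"
  by (simp add: UNIV_Times_UNIV[symmetric] sum.cartesian_product del: UNIV_Times_UNIV)

lemma sum_if_const: "(\<Sum>j\<in>A. if P then f j else 0) = (if P then \<Sum>j\<in>A. f j else 0)"
  by simp

lemmas delta_simps = if_distrib[of "\<lambda>z. z * _"] if_distrib[of "\<lambda>z. _ * z"] if_distrib[of cnj]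
  sum.delta sum.delta' sum_if_const

lemma qform_unit: "qform M (\<lambda>k. if k = i then \<alpha> else 0) = cnj \<alpha> * M i i * \<alpha>"
  unfolding qform_def by (simp add: delta_simps cong: if_cong)

lemma qform_add_unit:
  "qform M (\<lambda>k. x k + (if k = i then z else 0)) =
     qform M x + cnj z * (\<Sum>l\<in>UNIV. M i l * x l) + (\<Sum>k\<in>UNIV. cnj (x k) * M k i) * z + cnj z * M i i * z"
  unfolding qform_def
  by (simp add: algebra_simps sum.distrib sum_distrib_left sum_distrib_right delta_simps cong: if_cong)

lemma psd_diag: "psd M \<Longrightarrow> Im (M i i) = 0 \<and> 0 \<le> Re (M i i)"
  using qform_unit[of M i 1] unfolding psd_def by (metis complex_cnj_one mult_1 mult_1_right)

lemma psd_hermitian: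
  assumes "psd M" shows "M j i = cnj (M i j)"
proof -
  let ?e = "\<lambda>k. if k = j then 1 else (0::complex)"
  have "Im (qform M (\<lambda>k. ?e k + (if k = i then z else 0))) = 0" for z
    using assms unfolding psd_def by blast
  then have "Im (cnj z * M i j + M j i * z) = 0" for z
    using psd_diag[OF assms, of i] psd_diag[OF assms, of j]
    by (simp add: qform_add_unit qform_unit delta_simps cong: if_cong)
  from this[of 1] this[of \<i>] show ?thesis by (simp add: complex_eq_iff)
qed

lemma nonneg_quadratic_imp_le:
  fixes b q w :: real
  assumes nonneg: "\<And>t. 0 \<le> q - 2 * t * w + t\<^sup>2 * b * w" and "0 \<le> b" "0 \<le> w"
  shows "w \<le> b * q"
proof (cases "b = 0")
  case True
  have "w = 0"
  proof (rule ccontr)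
    assume "w \<noteq> 0"
    with \<open>0 \<le> w\<close> have "0 < w" by simp
    have "0 \<le> q - 2 * ((\<bar>q\<bar> + 1) / (2 * w)) * w" using nonneg[of "(\<bar>q\<bar> + 1) / (2 * w)"] True by simp
    also have "\<dots> = q - (\<bar>q\<bar> + 1)" using \<open>0 < w\<close> by (simp add: field_simps)
    finally show False by linarith
  qed
  then show ?thesis using True by simp
next
  case False
  with \<open>0 \<le> b\<close> have "0 < b" by simp
  have "0 \<le> q - 2 * (1 / b) * w + (1 / b)\<^sup>2 * b * w" by (rule nonneg)
  also have "\<dots> = q - w / b" using \<open>0 < b\<close> by (simp add: field_simps power2_eq_square)
  finally show ?thesis using \<open>0 < b\<close> by (simp add: field_simps)
qed

lemma psd_Cauchy_Schwarz:
  assumes "psd B"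
  shows "(cmod (\<Sum>l\<in>UNIV. B i l * x l))\<^sup>2 \<le> Re (B i i) * Re (qform B x)"
proof -
  define w where "w = (\<Sum>l\<in>UNIV. B i l * x l)"
  have Bii: "B i i = of_real (Re (B i i))" using psd_diag[OF assms, of i] by (simp add: complex_eq_iff)
  have cnj_w: "(\<Sum>k\<in>UNIV. cnj (x k) * B k i) = cnj w"
    unfolding w_def cnj_sum by (simp add: psd_hermitian[OF assms, of _ i] mult.commute)
  have "0 \<le> Re (qform B x) - 2 * t * (cmod w)\<^sup>2 + t\<^sup>2 * Re (B i i) * (cmod w)\<^sup>2" for t
  proof -
    have "0 \<le> Re (qform B (\<lambda>k. x k + (if k = i then - of_real t * w else 0)))"
      using assms unfolding psd_def by blast
    also have "\<dots> = Re (qform B x) - 2 * t * (cmod w)\<^sup>2 + t\<^sup>2 * Re (B i i) * (cmod w)\<^sup>2"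
      unfolding qform_add_unit cnj_w w_def[symmetric]
      using cmod_power2[of w] by (subst Bii) (simp add: algebra_simps power2_eq_square)
    finally show ?thesis .
  qed
  then show ?thesis
    unfolding w_def[symmetric] by (rule nonneg_quadratic_imp_le) (use psd_diag[OF assms, of i] in auto)
qed

lemma psd_row_eq_0:
  assumes "psd B" and "B j j = 0"
  shows "B j k = 0"
  using psd_Cauchy_Schwarz[OF assms(1), of j "\<lambda>l. if l = k then 1 else 0"] assms(2)
  by (simp add: delta_simps cong: if_cong)

(* One Cholesky step: v is the i-th column scaled by (B i i)^(-1/2) and B' is the Schur
   complement, which is positive by Cauchy-Schwarz. *)
lemma psd_split_rank_one:
  assumes psd: "psd B" and "B i i \<noteq> 0"
  obtains v B' where "psd B'" "B' i i = 0" "\<And>j. B j j = 0 \<Longrightarrow> B' j j = 0"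
    and "B = (\<lambda>j k. B' j k + v j * cnj (v k))"
proof -
  define b where "b = Re (B i i)"
  have Bii: "B i i = of_real b" using psd_diag[OF psd, of i] unfolding b_def by (simp add: complex_eq_iff)
  have "0 \<le> b" "b \<noteq> 0" using psd_diag[OF psd, of i] \<open>B i i \<noteq> 0\<close> Bii unfolding b_def by auto
  then have "0 < b" by simp
  define v where "v j = B j i / of_real (sqrt b)" for j
  define B' where "B' j k = B j k - v j * cnj (v k)" for j k
  have vv: "v j * cnj (v k) = B j i * B i k / of_real b" for j k
    using \<open>0 < b\<close> by (simp add: v_def psd_hermitian[OF psd, of i k] field_simps flip: of_real_mult)
  have "psd B'"
    unfolding psd_def
  proof
    fix x
    define w where "w = (\<Sum>l\<in>UNIV. B i l * x l)"
    have "cnj w = (\<Sum>j\<in>UNIV. cnj (x j) * B j i)"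
      unfolding w_def cnj_sum by (simp add: psd_hermitian[OF psd, of _ i] mult.commute)
    then have "qform B' x = qform B x - cnj w * w / of_real b"
      unfolding qform_def B'_def vv w_def
      by (simp add: algebra_simps sum_subtractf sum_product sum_divide_distrib) (rule sum.swap)
    also have "cnj w * w / of_real b = of_real ((cmod w)\<^sup>2 / b)"
      by (simp add: complex_norm_square mult.commute flip: of_real_power)
    finally have "qform B' x = qform B x - of_real ((cmod w)\<^sup>2 / b)" .
    moreover have "(cmod w)\<^sup>2 / b \<le> Re (qform B x)"
      using psd_Cauchy_Schwarz[OF psd, of i x] \<open>0 < b\<close> unfolding w_def b_def by (simp add: field_simps)
    ultimately show "Im (qform B' x) = 0 \<and> 0 \<le> Re (qform B' x)" using psd unfolding psd_def by simp
  qed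
  moreover have "B' i i = 0" using \<open>0 < b\<close> by (simp add: B'_def vv Bii)
  moreover have "B' j j = 0" if "B j j = 0" for j
    using psd_row_eq_0[OF psd that, of i] by (simp add: B'_def vv that)
  moreover have "B = (\<lambda>j k. B' j k + v j * cnj (v k))" by (simp add: B'_def)
  ultimately show ?thesis using that by blast
qed

lemma mtrace_mmul_add_rank_one:
  "mtrace (mmul A (\<lambda>j k. B j k + v j * cnj (v k))) = mtrace (mmul A B) + qform A v"
  unfolding mtrace_def mmul_def qform_def
  by (simp add: algebra_simps sum.distrib)

lemma psd_mtrace_mmul_nonneg:
  assumes "psd A" and "psd B"
  shows "0 \<le> Re (mtrace (mmul A B))"
  using assms(2)
proof (induction "card {j. B j j \<noteq> 0}" arbitrary: B rule: less_induct)
  case less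
  show ?case
  proof (cases "\<exists>i. B i i \<noteq> 0")
    case False
    then have "B = (\<lambda>j k. 0)" using psd_row_eq_0[OF less.prems] by blast
    then show ?thesis by (simp add: mtrace_def mmul_def)
  next
    case True
    then obtain i where "B i i \<noteq> 0" by blast
    obtain v B' where B': "psd B'" "B' i i = 0" "\<And>j. B j j = 0 \<Longrightarrow> B' j j = 0"
      and B: "B = (\<lambda>j k. B' j k + v j * cnj (v k))"
      using psd_split_rank_one[OF less.prems \<open>B i i \<noteq> 0\<close>] by metis
    have "{j. B' j j \<noteq> 0} \<subset> {j. B j j \<noteq> 0}" using B'(2,3) \<open>B i i \<noteq> 0\<close> by blast
    then have "card {j. B' j j \<noteq> 0} < card {j. B j j \<noteq> 0}" by (simp add: psubset_card_mono)
    then have "0 \<le> Re (mtrace (mmul A B'))" using less.hyps B'(1) by blast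
    moreover have "0 \<le> Re (qform A v)" using assms(1) unfolding psd_def by blast
    ultimately show ?thesis by (simp add: B mtrace_mmul_add_rank_one)
  qed
qed

lemma sum_swap_pairs:
  "(\<Sum>a\<in>A. \<Sum>b\<in>B. \<Sum>c\<in>C. \<Sum>d\<in>D. f a b c d) = (\<Sum>c\<in>C. \<Sum>d\<in>D. \<Sum>a\<in>A. \<Sum>b\<in>B. f a b c d)"
proof -
  have "(\<Sum>a\<in>A. \<Sum>b\<in>B. \<Sum>c\<in>C. \<Sum>d\<in>D. f a b c d) = (\<Sum>a\<in>A. \<Sum>c\<in>C. \<Sum>b\<in>B. \<Sum>d\<in>D. f a b c d)"
    by (rule sum.cong[OF refl], rule sum.swap)
  also have "\<dots> = (\<Sum>c\<in>C. \<Sum>a\<in>A. \<Sum>b\<in>B. \<Sum>d\<in>D. f a b c d)"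
    by (rule sum.swap)
  also have "\<dots> = (\<Sum>c\<in>C. \<Sum>a\<in>A. \<Sum>d\<in>D. \<Sum>b\<in>B. f a b c d)"
    by (rule sum.cong[OF refl], rule sum.cong[OF refl], rule sum.swap)
  also have "\<dots> = (\<Sum>c\<in>C. \<Sum>d\<in>D. \<Sum>a\<in>A. \<Sum>b\<in>B. f a b c d)"
    by (rule sum.cong[OF refl], rule sum.swap)
  finally show ?thesis .
qed

lemma psd_congruence:
  fixes K :: "'i::finite \<Rightarrow> 'j::finite \<Rightarrow> complex"
  assumes "psd J"
  shows "psd (\<lambda>i i'. \<Sum>j\<in>UNIV. \<Sum>j'\<in>UNIV. K i j * J j j' * cnj (K i' j'))"
  unfolding psd_def
proof
  fix v
  have "qform (\<lambda>i i'. \<Sum>j\<in>UNIV. \<Sum>j'\<in>UNIV. K i j * J j j' * cnj (K i' j')) v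
      = qform J (\<lambda>j. \<Sum>i\<in>UNIV. cnj (K i j) * v i)" (is "qform ?M v = _")
    unfolding qform_def
    apply (simp add: sum_distrib_left sum_distrib_right cnj_sum)
    apply (subst sum_swap_pairs)
    apply (rule sum.cong[OF refl], rule sum.cong[OF refl], rule trans[OF _ sum.swap])
    apply (simp add: mult_ac)
    done
  then show "Im (qform ?M v) = 0 \<and> 0 \<le> Re (qform ?M v)" using assms unfolding psd_def by simp
qed

lemma rhoJ_apply:
  "rhoJ xi J (a, b) (a', b') = (\<Sum>x\<in>UNIV. \<Sum>y\<in>UNIV. xi (a, x) * J (x, b) (y, b') * cnj (xi (a', y)))"
  unfolding rhoJ_def ptrace_mid_def mmul_def kron_def reassoc_def ptranspose2_def outer_def eye_def
  by (simp add: sum_UNIV_prod delta_simps algebra_simps cong: if_cong)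

lemma psd_rhoJ:
  fixes xi :: "('a::finite \<times> 'x::finite) cvec" and J :: "('x \<times> 'b::finite) cmat"
  assumes "psd J"
  shows "psd (rhoJ xi J)"
proof -
  define K :: "'a \<times> 'b \<Rightarrow> 'x \<times> 'b \<Rightarrow> complex"
    where "K = (\<lambda>(a, b) (x, b'). if b = b' then xi (a, x) else 0)"
  have "rhoJ xi J = (\<lambda>i i'. \<Sum>j\<in>UNIV. \<Sum>j'\<in>UNIV. K i j * J j j' * cnj (K i' j'))"
    by (auto simp: fun_eq_iff K_def rhoJ_apply sum_UNIV_prod delta_simps cong: if_cong)
  then show ?thesis using psd_congruence[OF assms] by simp
qed

lemma mtrace_rhoJ:
  assumes "choi J" and "pure_state xi"
  shows "mtrace (rhoJ xi J) = 1"
proof -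
  have ptrace: "(\<Sum>b\<in>UNIV. J (x, b) (y, b)) = eye x y" for x y
    using assms(1) unfolding choi_def ptrace2_def by (metis (no_types))
  have "mtrace (rhoJ xi J) = (\<Sum>a\<in>UNIV. \<Sum>x\<in>UNIV. \<Sum>y\<in>UNIV. xi (a, x) * (\<Sum>b\<in>UNIV. J (x, b) (y, b)) * cnj (xi (a, y)))"
    unfolding mtrace_def sum_UNIV_prod rhoJ_apply
    by (simp add: sum_distrib_left sum_distrib_right sum.swap[of _ "UNIV :: 'b set"])
  also have "\<dots> = of_real (\<Sum>i\<in>UNIV. (cmod (xi i))\<^sup>2)"
    by (simp add: ptrace eye_def sum_UNIV_prod delta_simps complex_norm_square[unfolded of_real_power] cong: if_cong)
  also have "\<dots> = 1" using assms(2) unfolding pure_state_def by simp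
  finally show ?thesis .
qed

lemma density_rhoJ: "choi J \<Longrightarrow> pure_state xi \<Longrightarrow> density (rhoJ xi J)"
  using mtrace_rhoJ psd_rhoJ unfolding density_def choi_def by blast

lemma prob_dist_Phi:
  fixes P :: "'c::finite \<Rightarrow> ('i::finite) cmat"
  assumes "povm P" and "density \<rho>"
  shows "prob_dist (Phi P \<rho>)"
  unfolding prob_dist_def
proof
  show "\<forall>c. 0 \<le> Phi P \<rho> c"
    using assms psd_mtrace_mmul_nonneg unfolding povm_def density_def Phi_def by blast
  have "(\<Sum>c\<in>UNIV. mtrace (mmul (P c) \<rho>)) = mtrace (mmul (\<lambda>i j. \<Sum>c\<in>UNIV. P c i j) \<rho>)"
    unfolding mtrace_def mmul_def
    by (simp add: sum_distrib_right sum.swap[of _ "UNIV :: 'c set"])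
  also have "\<dots> = mtrace \<rho>"
    using assms(1) unfolding povm_def by (simp add: mtrace_def mmul_def eye_def delta_simps cong: if_cong)
  finally show "(\<Sum>c\<in>UNIV. Phi P \<rho> c) = 1"
    using assms(2) unfolding Phi_def density_def by (simp flip: Re_sum)
qed

definition mat_comb :: "real \<Rightarrow> 'i cmat \<Rightarrow> 'i cmat \<Rightarrow> 'i cmat" where
  "mat_comb t A B = (\<lambda>i j. of_real t * A i j + of_real (1 - t) * B i j)"

lemma rhoJ_mat_comb: "rhoJ xi (mat_comb t J1 J2) = mat_comb t (rhoJ xi J1) (rhoJ xi J2)"
  by (auto simp: fun_eq_iff mat_comb_def rhoJ_apply distrib_left distrib_right sum.distrib
      sum_distrib_left mult.assoc mult.left_commute)

lemma Phi_mat_comb: "Phi P (mat_comb t A B) c = t * Phi P A c + (1 - t) * Phi P B c"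
proof -
  have "mtrace (mmul (P c) (mat_comb t A B))
      = of_real t * mtrace (mmul (P c) A) + of_real (1 - t) * mtrace (mmul (P c) B)"
    by (simp add: mtrace_def mmul_def mat_comb_def distrib_left sum.distrib sum_distrib_left
        mult.left_commute)
  then show ?thesis unfolding Phi_def by simp
qed

lemma choi_mat_comb:
  assumes "choi J1" and "choi J2" and "0 \<le> t" and "t \<le> 1"
  shows "choi (mat_comb t J1 J2)"
proof -
  have "qform (mat_comb t J1 J2) v = of_real t * qform J1 v + of_real (1 - t) * qform J2 v" for v
    unfolding qform_def mat_comb_def
    by (simp add: distrib_left distrib_right sum.distrib sum_distrib_left mult.assoc mult.left_commute)
  then have "psd (mat_comb t J1 J2)" using assms unfolding choi_def psd_def by simp
  moreover have "ptrace2 (mat_comb t J1 J2) = mat_comb t (ptrace2 J1) (ptrace2 J2)"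
    unfolding ptrace2_def mat_comb_def by (simp add: sum.distrib sum_distrib_left)
  then have "ptrace2 (mat_comb t J1 J2) = eye"
    using assms unfolding choi_def mat_comb_def eye_def by (auto simp flip: distrib_right of_real_add)
  ultimately show ?thesis unfolding choi_def by simp
qed

lemma ex_choi: "\<exists>J :: ('x::finite \<times> 'b::finite) cmat. choi J"
proof -
  define n where "n = real CARD('b)"
  have "0 < n" unfolding n_def by simp
  define J :: "('x \<times> 'b) cmat" where "J p q = (if p = q then of_real (1 / n) else 0)" for p q
  have "qform J v = of_real (\<Sum>p\<in>UNIV. (cmod (v p))\<^sup>2 / n)" for v
    unfolding qform_def J_def
    by (simp add: delta_simps complex_norm_square[unfolded of_real_power]
        mult_ac cong: if_cong)
  then have "psd J" unfolding psd_def using \<open>0 < n\<close> by (simp add: sum_nonneg)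
  moreover have "ptrace2 J = eye"
    using \<open>0 < n\<close> unfolding ptrace2_def J_def eye_def n_def by (auto simp: fun_eq_iff)
  ultimately show ?thesis unfolding choi_def by blast
qed

lemma s_fun_eq: "0 < \<phi>0 \<Longrightarrow> s_fun \<phi>0 \<phi>1 x = (max (x - \<phi>1) 0)\<^sup>2 / (4 * \<phi>0)"
  unfolding s_fun_def by (auto simp: max_def)

lemma s_fun_nonneg: "0 < \<phi>0 \<Longrightarrow> 0 \<le> s_fun \<phi>0 \<phi>1 x"
  by (simp add: s_fun_eq)

lemma s_fun_mono: "0 < \<phi>0 \<Longrightarrow> x \<le> y \<Longrightarrow> s_fun \<phi>0 \<phi>1 x \<le> s_fun \<phi>0 \<phi>1 y"
  by (simp add: s_fun_eq divide_right_mono power_mono)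

lemma square_convex:
  fixes a b t :: real
  assumes "0 \<le> t" "t \<le> 1"
  shows "(t * a + (1 - t) * b)\<^sup>2 \<le> t * a\<^sup>2 + (1 - t) * b\<^sup>2"
proof -
  have "t * a\<^sup>2 + (1 - t) * b\<^sup>2 - (t * a + (1 - t) * b)\<^sup>2 = t * (1 - t) * (a - b)\<^sup>2"
    by (simp add: power2_eq_square algebra_simps)
  moreover have "0 \<le> t * (1 - t) * (a - b)\<^sup>2" using assms by simp
  ultimately show ?thesis by linarith
qed

lemma s_fun_convex:
  assumes "0 < \<phi>0" and "0 \<le> t" "t \<le> 1"
  shows "s_fun \<phi>0 \<phi>1 (t * a + (1 - t) * b) \<le> t * s_fun \<phi>0 \<phi>1 a + (1 - t) * s_fun \<phi>0 \<phi>1 b"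
proof -
  define h where "h x = max (x - \<phi>1) (0::real)" for x
  have "t * a + (1 - t) * b - \<phi>1 = t * (a - \<phi>1) + (1 - t) * (b - \<phi>1)" by (simp add: algebra_simps)
  also have "\<dots> \<le> t * h a + (1 - t) * h b"
    unfolding h_def using assms by (intro add_mono mult_left_mono) auto
  finally have "h (t * a + (1 - t) * b) \<le> t * h a + (1 - t) * h b"
    unfolding h_def using assms by simp
  then have "(h (t * a + (1 - t) * b))\<^sup>2 \<le> (t * h a + (1 - t) * h b)\<^sup>2"
    by (rule power_mono) (simp add: h_def)
  also have "\<dots> \<le> t * (h a)\<^sup>2 + (1 - t) * (h b)\<^sup>2" using assms(2,3) by (rule square_convex)
  finally show ?thesis
    using assms(1) unfolding s_fun_eq[OF assms(1)] h_def[symmetric]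
    by (simp add: field_simps)
qed

lemma dotv_le_T_hat_add_s_fun:
  fixes g lam :: "'c::finite \<Rightarrow> real"
  assumes "0 < \<phi>0" and "(\<Sum>c\<in>UNIV. lam c) = 0"
  shows "dotv g lam \<le> T_hat \<phi>0 \<phi>1 g + s_fun \<phi>0 \<phi>1 ((\<Sum>c\<in>UNIV. \<bar>lam c\<bar>) / 2)"
proof -
  define M m where "M = Max (range g)" and "m = Min (range g)"
  define D where "D = M - m"
  define t where "t = (\<Sum>c\<in>UNIV. \<bar>lam c\<bar>) / 2"
  have range: "m \<le> g c" "g c \<le> M" for c unfolding M_def m_def by auto
  then have "0 \<le> D" unfolding D_def by (metis diff_ge_0_iff_ge order_trans)
  have "(\<Sum>c\<in>UNIV. (g c - (M + m) / 2) * lam c) = dotv g lam - (M + m) / 2 * (\<Sum>c\<in>UNIV. lam c)"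
    by (simp add: dotv_def left_diff_distrib sum_subtractf sum_distrib_left)
  then have "dotv g lam = (\<Sum>c\<in>UNIV. (g c - (M + m) / 2) * lam c)"
    using assms(2) by simp
  also have "\<dots> \<le> (\<Sum>c\<in>UNIV. D / 2 * \<bar>lam c\<bar>)"
  proof (rule sum_mono)
    fix c
    have "\<bar>g c - (M + m) / 2\<bar> \<le> D / 2" using range[of c] unfolding D_def by (simp add: abs_le_iff field_simps)
    then have "\<bar>(g c - (M + m) / 2) * lam c\<bar> \<le> D / 2 * \<bar>lam c\<bar>"
      unfolding abs_mult by (rule mult_right_mono) simp
    then show "(g c - (M + m) / 2) * lam c \<le> D / 2 * \<bar>lam c\<bar>" by simp
  qed
  also have "\<dots> = D * t" unfolding t_def by (simp add: sum_distrib_left sum_divide_distrib)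
  also have "\<dots> \<le> \<phi>0 * D\<^sup>2 + \<phi>1 * D + s_fun \<phi>0 \<phi>1 t"
  proof (cases "\<phi>1 \<le> t")
    case True
    \<comment> \<open>completing the square in \<open>D\<close>\<close>
    have "0 \<le> (2 * \<phi>0 * D - (t - \<phi>1))\<^sup>2 / (4 * \<phi>0)" using assms(1) by simp
    also have "\<dots> = \<phi>0 * D\<^sup>2 - D * (t - \<phi>1) + (t - \<phi>1)\<^sup>2 / (4 * \<phi>0)"
      using assms(1) by (simp add: power2_eq_square field_simps)
    finally show ?thesis using True unfolding s_fun_def by (simp add: algebra_simps)
  next
    case False
    then have "D * t \<le> \<phi>1 * D" using \<open>0 \<le> D\<close> by (simp add: mult_left_mono mult.commute)
    moreover have "0 \<le> \<phi>0 * D\<^sup>2" using assms(1) by simp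
    ultimately show ?thesis using s_fun_nonneg[OF assms(1), of \<phi>1 t] by linarith
  qed
  finally show ?thesis unfolding T_hat_def t_def D_def M_def m_def .
qed

lemma T_hat_le_dotv_sub_s_fun:
  fixes g :: "'c::finite \<Rightarrow> real"
  assumes "0 < \<phi>0" and "0 \<le> \<phi>1"
  shows "\<exists>lam. T_hat \<phi>0 \<phi>1 g \<le> dotv g lam - s_fun \<phi>0 \<phi>1 ((\<Sum>c\<in>UNIV. \<bar>lam c\<bar>) / 2)"
proof -
  define M m where "M = Max (range g)" and "m = Min (range g)"
  have "M \<in> range g" "m \<in> range g" unfolding M_def m_def by (simp_all add: Max_in Min_in)
  then obtain cM cm where "g cM = M" "g cm = m" by blast
  define D where "D = M - m"
  have "m \<le> g cM" unfolding m_def by auto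
  then have "0 \<le> D" unfolding D_def using \<open>g cM = M\<close> by simp
  \<comment> \<open>the maximiser puts mass \<open>\<tau>\<close> on an argmax and \<open>-\<tau>\<close> on an argmin of \<open>g\<close>\<close>
  define \<tau> where "\<tau> = \<phi>1 + 2 * \<phi>0 * D"
  define lam where "lam c = (if c = cM then \<tau> else 0) - (if c = cm then \<tau> else 0)" for c
  show ?thesis
  proof (cases "cM = cm")
    case True
    then have "T_hat \<phi>0 \<phi>1 g = 0" and "lam = (\<lambda>c. 0)"
      using \<open>g cM = M\<close> \<open>g cm = m\<close> by (auto simp: T_hat_def M_def m_def lam_def)
    then show ?thesis using assms by (intro exI[of _ lam]) (simp add: dotv_def s_fun_eq)
  next
    case False
    have "dotv g lam = \<tau> * D"
      using False \<open>g cM = M\<close> \<open>g cm = m\<close>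
      by (simp add: dotv_def lam_def D_def right_diff_distrib sum_subtractf delta_simps
          cong: if_cong)
    moreover have "(\<Sum>c\<in>UNIV. \<bar>lam c\<bar>) / 2 = \<tau>"
    proof -
      have "0 \<le> \<tau>" unfolding \<tau>_def using assms \<open>0 \<le> D\<close> by simp
      then have "(\<Sum>c\<in>UNIV. \<bar>lam c\<bar>) = (\<Sum>c\<in>UNIV. (if c = cM then \<tau> else 0) + (if c = cm then \<tau> else 0))"
        unfolding lam_def using False by (intro sum.cong) auto
      then show ?thesis by (simp add: sum.distrib)
    qed
    moreover have "s_fun \<phi>0 \<phi>1 \<tau> = \<phi>0 * D\<^sup>2"
      unfolding s_fun_def \<tau>_def using assms \<open>0 \<le> D\<close> by (simp add: power2_eq_square field_simps)
    ultimately have "dotv g lam - s_fun \<phi>0 \<phi>1 ((\<Sum>c\<in>UNIV. \<bar>lam c\<bar>) / 2) = \<tau> * D - \<phi>0 * D\<^sup>2"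
      by simp
    also have "\<dots> = T_hat \<phi>0 \<phi>1 g"
      unfolding T_hat_def M_def[symmetric] m_def[symmetric] D_def[symmetric] \<tau>_def
      by (simp add: power2_eq_square algebra_simps)
    finally show ?thesis by (intro exI[of _ lam]) simp
  qed
qed

definition convexlike :: "'d set \<Rightarrow> ('d \<Rightarrow> 'c \<Rightarrow> real) \<Rightarrow> ('d \<Rightarrow> real) \<Rightarrow> bool" where
  "convexlike D U f \<longleftrightarrow> (\<forall>d1\<in>D. \<forall>d2\<in>D. \<forall>t. 0 \<le> t \<and> t \<le> 1 \<longrightarrow>
     (\<exists>d\<in>D. U d = (\<lambda>c. t * U d1 c + (1 - t) * U d2 c) \<and> f d \<le> t * f d1 + (1 - t) * f d2))"

lemma convex_strict_epigraph_image:
  fixes f :: "'d \<Rightarrow> real" and U :: "'d \<Rightarrow> 'c::finite \<Rightarrow> real"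
  assumes "convexlike D U f"
  shows "convex {((\<chi> c. U d c), r) | d r. d \<in> D \<and> f d < r}"
  unfolding convex_alt
proof (intro ballI allI impI, elim conjE)
  fix x y and t :: real
  assume "x \<in> {((\<chi> c. U d c), r) | d r. d \<in> D \<and> f d < r}" "y \<in> {((\<chi> c. U d c), r) | d r. d \<in> D \<and> f d < r}"
    and t: "0 \<le> t" "t \<le> 1"
  then obtain d1 r1 d2 r2 where x: "x = ((\<chi> c. U d1 c), r1)" "d1 \<in> D" "f d1 < r1"
    and y: "y = ((\<chi> c. U d2 c), r2)" "d2 \<in> D" "f d2 < r2" by blast
  obtain d where d: "d \<in> D" "U d = (\<lambda>c. t * U d2 c + (1 - t) * U d1 c)" "f d \<le> t * f d2 + (1 - t) * f d1"
    using assms y(2) x(2) t unfolding convexlike_def by blast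
  have "t * f d2 + (1 - t) * f d1 < t * r2 + (1 - t) * r1"
  proof (cases "t = 1")
    case False
    then have "(1 - t) * f d1 < (1 - t) * r1" using t x(3) by simp
    moreover have "t * f d2 \<le> t * r2" using t y(3) by (simp add: mult_left_mono)
    ultimately show ?thesis by linarith
  qed (use y in simp)
  with d have "(1 - t) *\<^sub>R x + t *\<^sub>R y = ((\<chi> c. U d c), t * r2 + (1 - t) * r1) \<and> f d < t * r2 + (1 - t) * r1"
    unfolding x y by (auto simp: vec_eq_iff algebra_simps)
  then show "(1 - t) *\<^sub>R x + t *\<^sub>R y \<in> {((\<chi> c. U d c), r) | d r. d \<in> D \<and> f d < r}"
    using d(1) by blast
qed

(* Separate the origin from {(U d, r) | f d - p < r}.  Since U is onto, the last coordinate
   a_r of the normal (a, a_r) is positive, and g = a / a_r is the multiplier. *)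
lemma lagrange_multiplier_exists:
  fixes f :: "'d \<Rightarrow> real" and U :: "'d \<Rightarrow> 'c::finite \<Rightarrow> real"
  assumes convex_like: "convexlike D U f"
    and onto: "\<And>u. \<exists>d\<in>D. U d = u"
    and feasible: "\<And>d. d \<in> D \<Longrightarrow> U d = (\<lambda>c. 0) \<Longrightarrow> p \<le> f d"
  shows "\<exists>g. \<forall>d\<in>D. p \<le> f d + dotv g (U d)"
proof -
  define S where "S = {((\<chi> c. U d c), r) | d r. d \<in> D \<and> f d - p < r}"
  have "convex S"
    unfolding S_def
    by (rule convex_strict_epigraph_image) (use convex_like in \<open>fastforce simp: convexlike_def algebra_simps\<close>)
  moreover have "0 \<notin> S"
    using feasible by (force simp: S_def vec_eq_iff zero_prod_def)
  ultimately obtain av ar where "(av, ar) \<noteq> 0" and "\<forall>x\<in>S. 0 \<le> inner (av, ar) x"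
    using separating_hyperplane_set_0 by (metis surj_pair)
  then have "av \<noteq> 0 \<or> ar \<noteq> 0"
    and sep: "\<And>d r. d \<in> D \<Longrightarrow> f d - p < r \<Longrightarrow> 0 \<le> dotv (\<lambda>c. av $ c) (U d) + ar * r"
    by (fastforce simp: zero_prod_def S_def inner_vec_def inner_Pair dotv_def)+
  have "0 < ar"
  proof -
    obtain d0 where "d0 \<in> D" "U d0 = (\<lambda>c. 0)" using onto by blast
    with sep[of d0 "max (f d0 - p) 0 + 1"] have "0 \<le> ar * (max (f d0 - p) 0 + 1)" by (simp add: dotv_def)
    then have "0 \<le> ar" by (simp add: zero_le_mult_iff) linarith
    moreover have "ar \<noteq> 0"
    proof
      assume "ar = 0"
      obtain d where "d \<in> D" "U d = (\<lambda>c. - av $ c)" using onto by blast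
      with sep[of d "f d - p + 1"] \<open>ar = 0\<close> have "(\<Sum>c\<in>UNIV. (av $ c)\<^sup>2) \<le> 0"
        by (simp add: dotv_def power2_eq_square sum_negf)
      then have "(\<Sum>c\<in>UNIV. (av $ c)\<^sup>2) = 0" by (simp add: antisym sum_nonneg)
      then have "av = 0" by (simp add: sum_nonneg_eq_0_iff vec_eq_iff)
      with \<open>av \<noteq> 0 \<or> ar \<noteq> 0\<close> \<open>ar = 0\<close> show False by simp
    qed
    ultimately show ?thesis by simp
  qed
  have "p \<le> f d + dotv (\<lambda>c. av $ c / ar) (U d)" if "d \<in> D" for d
  proof -
    have "p - f d \<le> dotv (\<lambda>c. av $ c) (U d) / ar + e" if "0 < e" for e
      using sep[OF \<open>d \<in> D\<close>, of "f d - p + e"] \<open>0 < e\<close> \<open>0 < ar\<close> by (simp add: field_simps)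
    then have "p - f d \<le> dotv (\<lambda>c. av $ c) (U d) / ar" by (rule field_le_epsilon)
    then show ?thesis by (simp add: dotv_def sum_divide_distrib)
  qed
  then show ?thesis by blast
qed

lemma s_fun_half_norm1_convex:
  fixes x y :: "'c::finite \<Rightarrow> real"
  assumes "0 < \<phi>0" and "0 \<le> t" "t \<le> 1"
  shows "s_fun \<phi>0 \<phi>1 ((\<Sum>c\<in>UNIV. \<bar>t * x c + (1 - t) * y c\<bar>) / 2)
    \<le> t * s_fun \<phi>0 \<phi>1 ((\<Sum>c\<in>UNIV. \<bar>x c\<bar>) / 2) + (1 - t) * s_fun \<phi>0 \<phi>1 ((\<Sum>c\<in>UNIV. \<bar>y c\<bar>) / 2)"
proof -
  have "(\<Sum>c\<in>UNIV. \<bar>t * x c + (1 - t) * y c\<bar>) \<le> (\<Sum>c\<in>UNIV. t * \<bar>x c\<bar> + (1 - t) * \<bar>y c\<bar>)"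
  proof (rule sum_mono)
    fix c
    have "\<bar>t * x c + (1 - t) * y c\<bar> \<le> \<bar>t * x c\<bar> + \<bar>(1 - t) * y c\<bar>" by (rule abs_triangle_ineq)
    then show "\<bar>t * x c + (1 - t) * y c\<bar> \<le> t * \<bar>x c\<bar> + (1 - t) * \<bar>y c\<bar>"
      using assms(2,3) by (simp add: abs_mult)
  qed
  also have "\<dots> = t * (\<Sum>c\<in>UNIV. \<bar>x c\<bar>) + (1 - t) * (\<Sum>c\<in>UNIV. \<bar>y c\<bar>)"
    by (simp add: sum.distrib sum_distrib_left)
  finally have "(\<Sum>c\<in>UNIV. \<bar>t * x c + (1 - t) * y c\<bar>) / 2
      \<le> t * ((\<Sum>c\<in>UNIV. \<bar>x c\<bar>) / 2) + (1 - t) * ((\<Sum>c\<in>UNIV. \<bar>y c\<bar>) / 2)" by simp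
  then show ?thesis
    by (rule order_trans[OF s_fun_mono[OF assms(1)] s_fun_convex[OF assms]])
qed

locale crossover_setting =
  fixes W :: "('a::finite \<times> 'b::finite) cmat \<Rightarrow> real"
    and P :: "'c::finite \<Rightarrow> ('a \<times> 'b) cmat"
    and xig xit :: "('a \<times> 'x::finite) cvec"
    and \<phi>0 \<phi>1 :: real
    and qhon :: "'c \<Rightarrow> real"
  assumes pure_g: "pure_state xig" and pure_t: "pure_state xit"
    and W_nonneg: "\<forall>\<rho>. density \<rho> \<longrightarrow> 0 \<le> W \<rho>"
    and W_convex: "convex_on_states W"
    and P_povm: "povm P"
    and phi0: "0 < \<phi>0" and phi1: "0 \<le> \<phi>1"
    and qhon: "prob_dist qhon"
begin

definition residual :: "('x \<times> 'b) cmat \<Rightarrow> ('c \<Rightarrow> real) \<Rightarrow> 'c \<Rightarrow> real" where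
  "residual J lam = (\<lambda>c. qhon c - Phi P (rhoJ xit J) c - lam c)"

(* The objective of the T^* problem after eliminating lambda through the equality constraint. *)
definition primal_obj :: "('x \<times> 'b) cmat \<Rightarrow> real" where
  "primal_obj J = W (rhoJ xig J) + s_fun \<phi>0 \<phi>1 ((\<Sum>c\<in>UNIV. \<bar>qhon c - Phi P (rhoJ xit J) c\<bar>) / 2)"

definition r_primal :: ereal where
  "r_primal = Inf {ereal (primal_obj J) | J. choi J}"

lemma residual_mat_comb:
  "residual (mat_comb t J1 J2) (\<lambda>c. t * l1 c + (1 - t) * l2 c)
     = (\<lambda>c. t * residual J1 l1 c + (1 - t) * residual J2 l2 c)"
  by (simp add: residual_def rhoJ_mat_comb Phi_mat_comb fun_eq_iff algebra_simps)

lemma residual_eq_0_iff: "(\<forall>c. residual J lam c = 0) \<longleftrightarrow> lam = (\<lambda>c. qhon c - Phi P (rhoJ xit J) c)"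
  by (auto simp: residual_def fun_eq_iff)

lemma W_rhoJ_mat_comb:
  assumes "choi J1" "choi J2" "0 \<le> t" "t \<le> 1"
  shows "W (rhoJ xig (mat_comb t J1 J2)) \<le> t * W (rhoJ xig J1) + (1 - t) * W (rhoJ xig J2)"
  unfolding rhoJ_mat_comb unfolding mat_comb_def
  using W_convex[unfolded convex_on_states_def, rule_format,
      OF density_rhoJ[OF assms(1) pure_g] density_rhoJ[OF assms(2) pure_g] assms(3,4)] .

lemma sum_qhon_sub_Phi: "choi J \<Longrightarrow> (\<Sum>c\<in>UNIV. qhon c - Phi P (rhoJ xit J) c) = 0"
  using qhon prob_dist_Phi[OF P_povm density_rhoJ[OF _ pure_t]]
  by (simp add: prob_dist_def sum_subtractf)

lemma primal_obj_nonneg: "choi J \<Longrightarrow> 0 \<le> primal_obj J"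
  using W_nonneg density_rhoJ[OF _ pure_g] s_fun_nonneg[OF phi0] unfolding primal_obj_def
  by (meson add_nonneg_nonneg)

lemma r_primal_finite: "\<bar>r_primal\<bar> \<noteq> \<infinity>"
proof -
  obtain J :: "('x \<times> 'b) cmat" where "choi J" using ex_choi by blast
  then have "r_primal \<le> ereal (primal_obj J)" unfolding r_primal_def by (blast intro: Inf_lower)
  moreover have "0 \<le> r_primal" unfolding r_primal_def by (auto intro!: Inf_greatest primal_obj_nonneg)
  ultimately show ?thesis by auto
qed

lemma Inf_T_star_eq_r_primal:
  "Inf {ereal (W (rhoJ xig J)) + T_star \<phi>0 \<phi>1 lam | J lam. choi J \<and> (\<forall>c. residual J lam c = 0)}
     = r_primal"
proof -
  have "{ereal (W (rhoJ xig J)) + T_star \<phi>0 \<phi>1 lam | J lam. choi J \<and> (\<forall>c. residual J lam c = 0)}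
      = {ereal (primal_obj J) | J. choi J}"
    using sum_qhon_sub_Phi by (auto simp: residual_eq_0_iff T_star_def primal_obj_def)
  then show ?thesis unfolding r_primal_def by simp
qed

lemma Inf_relaxed_eq_r_primal:
  "Inf {ereal (W (rhoJ xig J) + s_fun \<phi>0 \<phi>1 ((\<Sum>c\<in>UNIV. \<nu> c) / 2)) | J lam \<nu>.
        choi J \<and> (\<forall>c. residual J lam c = 0) \<and> (\<forall>c. - \<nu> c \<le> lam c \<and> lam c \<le> \<nu> c)}
     = r_primal" (is "Inf ?R = _")
proof (rule antisym)
  show "Inf ?R \<le> r_primal"
    unfolding r_primal_def
  proof (rule Inf_superset_mono, safe)
    fix J :: "('x \<times> 'b) cmat" assume "choi J"
    then show "\<exists>J' lam \<nu>. ereal (primal_obj J) = ereal (W (rhoJ xig J') + s_fun \<phi>0 \<phi>1 ((\<Sum>c\<in>UNIV. \<nu> c) / 2))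
        \<and> choi J' \<and> (\<forall>c. residual J' lam c = 0) \<and> (\<forall>c. - \<nu> c \<le> lam c \<and> lam c \<le> \<nu> c)"
      by (intro exI[of _ J] exI[of _ "\<lambda>c. qhon c - Phi P (rhoJ xit J) c"]
          exI[of _ "\<lambda>c. \<bar>qhon c - Phi P (rhoJ xit J) c\<bar>"]) (auto simp: primal_obj_def residual_def)
  qed
  show "r_primal \<le> Inf ?R"
    unfolding r_primal_def
  proof (rule Inf_mono, safe)
    fix J :: "('x \<times> 'b) cmat" and lam \<nu> :: "'c \<Rightarrow> real"
    assume "choi J" "\<forall>c. residual J lam c = 0" and box: "\<forall>c. - \<nu> c \<le> lam c \<and> lam c \<le> \<nu> c"
    then have "lam = (\<lambda>c. qhon c - Phi P (rhoJ xit J) c)" by (simp add: residual_eq_0_iff)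
    with box have "\<bar>qhon c - Phi P (rhoJ xit J) c\<bar> \<le> \<nu> c" for c
      unfolding abs_le_iff by (metis minus_le_iff)
    then have "primal_obj J \<le> W (rhoJ xig J) + s_fun \<phi>0 \<phi>1 ((\<Sum>c\<in>UNIV. \<nu> c) / 2)"
      unfolding primal_obj_def by (simp add: s_fun_mono[OF phi0] divide_right_mono sum_mono)
    then show "\<exists>x\<in>{ereal (primal_obj J) | J. choi J}.
        x \<le> ereal (W (rhoJ xig J) + s_fun \<phi>0 \<phi>1 ((\<Sum>c\<in>UNIV. \<nu> c) / 2))"
      using \<open>choi J\<close> by auto
  qed
qed

lemma crossover_value_le_primal_obj:
  assumes "cross_mtf W P xig xit g k" and "choi J"
  shows "dotv g qhon + k - T_hat \<phi>0 \<phi>1 g \<le> primal_obj J"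
proof -
  let ?q = "Phi P (rhoJ xit J)"
  have "ereal (dotv g ?q + k) \<le> r_cross W P xig xit ?q"
    using assms prob_dist_Phi[OF P_povm density_rhoJ[OF _ pure_t]] unfolding cross_mtf_def by blast
  also have "\<dots> \<le> ereal (W (rhoJ xig J))" unfolding r_cross_def using assms(2) by (blast intro: Inf_lower)
  finally have "dotv g ?q + k \<le> W (rhoJ xig J)" by simp
  moreover have "dotv g (\<lambda>c. qhon c - ?q c) \<le> T_hat \<phi>0 \<phi>1 g + s_fun \<phi>0 \<phi>1 ((\<Sum>c\<in>UNIV. \<bar>qhon c - ?q c\<bar>) / 2)"
    by (rule dotv_le_T_hat_add_s_fun[OF phi0 sum_qhon_sub_Phi[OF assms(2)]])
  moreover have "dotv g (\<lambda>c. qhon c - ?q c) = dotv g qhon - dotv g ?q"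
    by (simp add: dotv_def right_diff_distrib sum_subtractf)
  ultimately show ?thesis unfolding primal_obj_def by simp
qed

lemma cross_mtf_of_lagrangian_bound:
  assumes "\<And>J lam. choi J \<Longrightarrow>
    p \<le> W (rhoJ xig J) + s_fun \<phi>0 \<phi>1 ((\<Sum>c\<in>UNIV. \<bar>lam c\<bar>) / 2) + dotv g (residual J lam)"
  shows "cross_mtf W P xig xit g (p - dotv g qhon + T_hat \<phi>0 \<phi>1 g)"
  unfolding cross_mtf_def
proof (intro allI impI)
  fix q :: "'c \<Rightarrow> real"
  obtain lam where lam: "T_hat \<phi>0 \<phi>1 g \<le> dotv g lam - s_fun \<phi>0 \<phi>1 ((\<Sum>c\<in>UNIV. \<bar>lam c\<bar>) / 2)"
    using T_hat_le_dotv_sub_s_fun[OF phi0 phi1] by blast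
  show "ereal (dotv g q + (p - dotv g qhon + T_hat \<phi>0 \<phi>1 g)) \<le> r_cross W P xig xit q"
    unfolding r_cross_def
  proof (rule Inf_greatest)
    fix x assume "x \<in> {ereal (W (rhoJ xig J)) | J. choi J \<and> Phi P (rhoJ xit J) = q}"
    then obtain J where "choi J" and q: "q = Phi P (rhoJ xit J)" and x: "x = ereal (W (rhoJ xig J))"
      by blast
    have "dotv g (residual J lam) = dotv g qhon - dotv g q - dotv g lam"
      by (simp add: residual_def q dotv_def right_diff_distrib sum_subtractf)
    then show "ereal (dotv g q + (p - dotv g qhon + T_hat \<phi>0 \<phi>1 g)) \<le> x"
      unfolding x using assms[OF \<open>choi J\<close>, of lam] lam by simp
  qed
qed

lemma primal_multiplier_exists:
  assumes "ereal p \<le> r_primal"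
  shows "\<exists>g. \<forall>J lam. choi J \<longrightarrow>
    p \<le> W (rhoJ xig J) + s_fun \<phi>0 \<phi>1 ((\<Sum>c\<in>UNIV. \<bar>lam c\<bar>) / 2) + dotv g (residual J lam)"
proof -
  have "\<exists>g. \<forall>d\<in>{(J, lam). choi J}.
      p \<le> (case d of (J, lam) \<Rightarrow> W (rhoJ xig J) + s_fun \<phi>0 \<phi>1 ((\<Sum>c\<in>UNIV. \<bar>lam c\<bar>) / 2))
        + dotv g (case d of (J, lam) \<Rightarrow> residual J lam)"
  proof (rule lagrange_multiplier_exists, unfold convexlike_def, safe, goal_cases)
    case (1 J1 l1 J2 l2 t)
    then have J: "choi J1" "choi J2" and t: "0 \<le> t" "t \<le> 1" by auto
    have "W (rhoJ xig (mat_comb t J1 J2)) + s_fun \<phi>0 \<phi>1 ((\<Sum>c\<in>UNIV. \<bar>t * l1 c + (1 - t) * l2 c\<bar>) / 2)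
        \<le> t * (W (rhoJ xig J1) + s_fun \<phi>0 \<phi>1 ((\<Sum>c\<in>UNIV. \<bar>l1 c\<bar>) / 2))
          + (1 - t) * (W (rhoJ xig J2) + s_fun \<phi>0 \<phi>1 ((\<Sum>c\<in>UNIV. \<bar>l2 c\<bar>) / 2))"
      using W_rhoJ_mat_comb[OF J t] s_fun_half_norm1_convex[OF phi0 t, where x = l1 and y = l2, of \<phi>1]
      unfolding distrib_left by linarith
    with J t show ?case
      by (intro bexI[of _ "(mat_comb t J1 J2, \<lambda>c. t * l1 c + (1 - t) * l2 c)"])
        (simp_all add: residual_mat_comb choi_mat_comb)
  next
    case (2 u)
    obtain J :: "('x \<times> 'b) cmat" where "choi J" using ex_choi by blast
    then show ?case
      by (intro bexI[of _ "(J, \<lambda>c. qhon c - Phi P (rhoJ xit J) c - u c)"]) (auto simp: residual_def)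
  next
    case (3 J lam)
    then have lam: "lam = (\<lambda>c. qhon c - Phi P (rhoJ xit J) c)" by (simp add: residual_def fun_eq_iff)
    have "ereal p \<le> r_primal" by (fact assms)
    also have "r_primal \<le> ereal (primal_obj J)" unfolding r_primal_def using 3 by (blast intro: Inf_lower)
    finally show ?case by (simp add: lam primal_obj_def)
  qed
  then show ?thesis by (simp add: Ball_def split_paired_All)
qed

lemma best_crossover_rate_eq_r_primal:
  "Sup {ereal (dotv g qhon + k - T_hat \<phi>0 \<phi>1 g) | g k. cross_mtf W P xig xit g k} = r_primal"
proof (rule antisym)
  show "Sup {ereal (dotv g qhon + k - T_hat \<phi>0 \<phi>1 g) | g k. cross_mtf W P xig xit g k} \<le> r_primal"
    unfolding r_primal_def
  proof (intro Sup_least Inf_greatest)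
    fix x y
    assume "x \<in> {ereal (dotv g qhon + k - T_hat \<phi>0 \<phi>1 g) | g k. cross_mtf W P xig xit g k}"
      and "y \<in> {ereal (primal_obj J) | J. choi J}"
    then show "x \<le> y" using crossover_value_le_primal_obj by auto
  qed
  obtain p where p: "ereal p = r_primal" using r_primal_finite by (cases r_primal) auto
  then obtain g where "\<forall>J lam. choi J \<longrightarrow>
      p \<le> W (rhoJ xig J) + s_fun \<phi>0 \<phi>1 ((\<Sum>c\<in>UNIV. \<bar>lam c\<bar>) / 2) + dotv g (residual J lam)"
    using primal_multiplier_exists[OF eq_refl[OF p]] by blast
  then have "cross_mtf W P xig xit g (p - dotv g qhon + T_hat \<phi>0 \<phi>1 g)"
    by (blast intro: cross_mtf_of_lagrangian_bound)
  then have "ereal (dotv g qhon + (p - dotv g qhon + T_hat \<phi>0 \<phi>1 g) - T_hat \<phi>0 \<phi>1 g)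
      \<le> Sup {ereal (dotv g qhon + k - T_hat \<phi>0 \<phi>1 g) | g k. cross_mtf W P xig xit g k}"
    by (blast intro: Sup_upper)
  then show "r_primal \<le> Sup {ereal (dotv g qhon + k - T_hat \<phi>0 \<phi>1 g) | g k. cross_mtf W P xig xit g k}"
    by (simp add: p)
qed

end

locale sdp_relaxation = crossover_setting W P xig xit \<phi>0 \<phi>1 qhon
  for W :: "('a::finite \<times> 'b::finite) cmat \<Rightarrow> real"
    and P :: "'c::finite \<Rightarrow> ('a \<times> 'b) cmat"
    and xig xit :: "('a \<times> 'x::finite) cvec"
    and \<phi>0 \<phi>1 :: real
    and qhon :: "'c \<Rightarrow> real" +
  fixes L :: "('a \<times> 'b) cmat \<Rightarrow> ('c \<Rightarrow> real) \<Rightarrow> real"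
  assumes L_affine: "affine_fun L"
    and L_le: "\<forall>(J :: ('x \<times> 'b) cmat) \<nu>. choi J \<longrightarrow>
      L (rhoJ xig J) \<nu> \<le> W (rhoJ xig J) + s_fun \<phi>0 \<phi>1 ((\<Sum>c\<in>UNIV. \<nu> c) / 2)"
begin

definition r_sdp :: ereal where
  "r_sdp = Inf {ereal (L (rhoJ xig J) \<nu>) | (J :: ('x \<times> 'b) cmat) lam \<nu>.
     choi J \<and> (\<forall>c. residual J lam c = 0) \<and> (\<forall>c. - \<nu> c \<le> lam c \<and> lam c \<le> \<nu> c)}"

definition sdp_lagrangian :: "('c \<Rightarrow> real) \<Rightarrow> ereal" where
  "sdp_lagrangian gs = Inf {ereal (L (rhoJ xig J) \<nu> + dotv gs (residual J lam)) | (J :: ('x \<times> 'b) cmat) lam \<nu>.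
     choi J \<and> (\<forall>c. - \<nu> c \<le> lam c \<and> lam c \<le> \<nu> c)}"

lemma sdp_lagrangian_le_r_sdp: "sdp_lagrangian gs \<le> r_sdp"
  unfolding sdp_lagrangian_def r_sdp_def
proof (rule Inf_superset_mono, safe)
  fix J :: "('x \<times> 'b) cmat" and lam \<nu>
  assume "choi J" "\<forall>c. residual J lam c = 0" "\<forall>c. - \<nu> c \<le> lam c \<and> lam c \<le> \<nu> c"
  moreover from this have "dotv gs (residual J lam) = 0" by (simp add: dotv_def)
  ultimately show "\<exists>J' lam' \<nu>'. ereal (L (rhoJ xig J) \<nu>) = ereal (L (rhoJ xig J') \<nu>' + dotv gs (residual J' lam'))
      \<and> choi J' \<and> (\<forall>c. - \<nu>' c \<le> lam' c \<and> lam' c \<le> \<nu>' c)"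
    by (intro exI[of _ J] exI[of _ lam] exI[of _ \<nu>]) auto
qed

lemma cross_mtf_of_sdp_lagrangian_bound:
  assumes "ereal p \<le> sdp_lagrangian gs"
  shows "cross_mtf W P xig xit gs (p - dotv gs qhon + T_hat \<phi>0 \<phi>1 gs)"
proof (rule cross_mtf_of_lagrangian_bound)
  fix J :: "('x \<times> 'b) cmat" and lam assume "choi J"
  have "ereal p \<le> ereal (L (rhoJ xig J) (\<lambda>c. \<bar>lam c\<bar>) + dotv gs (residual J lam))"
    using assms unfolding sdp_lagrangian_def
    by (rule order_trans, intro Inf_lower CollectI exI[of _ J] exI[of _ lam] exI[of _ "\<lambda>c. \<bar>lam c\<bar>"])
      (use \<open>choi J\<close> in auto)
  moreover have "L (rhoJ xig J) (\<lambda>c. \<bar>lam c\<bar>) \<le> W (rhoJ xig J) + s_fun \<phi>0 \<phi>1 ((\<Sum>c\<in>UNIV. \<bar>lam c\<bar>) / 2)"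
    using L_le \<open>choi J\<close> by blast
  ultimately show "p \<le> W (rhoJ xig J) + s_fun \<phi>0 \<phi>1 ((\<Sum>c\<in>UNIV. \<bar>lam c\<bar>) / 2) + dotv gs (residual J lam)"
    by simp
qed

lemma L_rhoJ_mat_comb:
  "L (rhoJ xig (mat_comb t J1 J2)) (\<lambda>c. t * \<nu>1 c + (1 - t) * \<nu>2 c)
     = t * L (rhoJ xig J1) \<nu>1 + (1 - t) * L (rhoJ xig J2) \<nu>2"
  unfolding rhoJ_mat_comb unfolding mat_comb_def
  using L_affine unfolding affine_fun_def by blast

lemma sdp_multiplier_exists:
  assumes "\<bar>r_sdp\<bar> \<noteq> \<infinity>"
  shows "\<exists>gs. r_sdp = sdp_lagrangian gs"
proof -
  obtain p where p: "ereal p = r_sdp" using assms by (cases r_sdp) auto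
  have "\<exists>g. \<forall>d\<in>{(J, lam, \<nu>). choi J \<and> (\<forall>c. - \<nu> c \<le> lam c \<and> lam c \<le> \<nu> c)}.
      p \<le> (case d of (J, lam, \<nu>) \<Rightarrow> L (rhoJ xig J) \<nu>) + dotv g (case d of (J, lam, \<nu>) \<Rightarrow> residual J lam)"
  proof (rule lagrange_multiplier_exists, unfold convexlike_def, safe, goal_cases)
    case (1 J1 l1 n1 J2 l2 n2 t)
    have "- (t * n1 c + (1 - t) * n2 c) \<le> t * l1 c + (1 - t) * l2 c
        \<and> t * l1 c + (1 - t) * l2 c \<le> t * n1 c + (1 - t) * n2 c" for c
    proof -
      from 1 have b: "- n1 c \<le> l1 c" "l1 c \<le> n1 c" "- n2 c \<le> l2 c" "l2 c \<le> n2 c"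
        and t: "0 \<le> t" "0 \<le> 1 - t" by auto
      show ?thesis
        using mult_left_mono[OF b(1) t(1)] mult_left_mono[OF b(2) t(1)]
          mult_left_mono[OF b(3) t(2)] mult_left_mono[OF b(4) t(2)]
        by (simp add: algebra_simps)
    qed
    then show ?case
      using 1 choi_mat_comb[of J1 J2 t]
      by (intro bexI[of _ "(mat_comb t J1 J2, \<lambda>c. t * l1 c + (1 - t) * l2 c, \<lambda>c. t * n1 c + (1 - t) * n2 c)"])
        (simp_all add: residual_mat_comb L_rhoJ_mat_comb)
  next
    case (2 u)
    obtain J :: "('x \<times> 'b) cmat" where "choi J" using ex_choi by blast
    then show ?case
      by (intro bexI[of _ "(J, \<lambda>c. qhon c - Phi P (rhoJ xit J) c - u c, \<lambda>c. \<bar>qhon c - Phi P (rhoJ xit J) c - u c\<bar>)"])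
        (auto simp: residual_def)
  next
    case (3 J lam \<nu>)
    then have "r_sdp \<le> ereal (L (rhoJ xig J) \<nu>)"
      unfolding r_sdp_def by (intro Inf_lower CollectI exI[of _ J] exI[of _ lam] exI[of _ \<nu>]) auto
    then show ?case using p[symmetric] by simp
  qed
  then obtain gs where "\<And>J lam \<nu>. choi J \<Longrightarrow> \<forall>c. - \<nu> c \<le> lam c \<and> lam c \<le> \<nu> c \<Longrightarrow>
      p \<le> L (rhoJ xig J) \<nu> + dotv gs (residual J lam)"
    by (simp add: Ball_def split_paired_All) blast
  then have "ereal p \<le> sdp_lagrangian gs" unfolding sdp_lagrangian_def by (auto intro!: Inf_greatest)
  then show ?thesis using sdp_lagrangian_le_r_sdp p by (metis antisym)
qed

lemma crossover_of_sdp_multiplier: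
  assumes "\<bar>r_sdp\<bar> \<noteq> \<infinity>" and "r_sdp = sdp_lagrangian gs"
  shows "\<exists>k. cross_mtf W P xig xit gs k \<and> r_sdp \<le> ereal (dotv gs qhon + k - T_hat \<phi>0 \<phi>1 gs)"
proof -
  obtain p where p: "ereal p = r_sdp" using assms(1) by (cases r_sdp) auto
  then have "cross_mtf W P xig xit gs (p - dotv gs qhon + T_hat \<phi>0 \<phi>1 gs)"
    using assms(2) by (intro cross_mtf_of_sdp_lagrangian_bound) simp
  then show ?thesis using p by (intro exI[of _ "p - dotv gs qhon + T_hat \<phi>0 \<phi>1 gs"]) auto
qed

end

theorem mainTheorem2:
  fixes W :: "('a::finite \<times> 'b::finite) cmat \<Rightarrow> real"
    and P :: "'c::finite \<Rightarrow> ('a \<times> 'b) cmat"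
    and xig xit :: "('a \<times> 'x::finite) cvec"
    and \<phi>0 \<phi>1 :: real
    and qhon :: "'c \<Rightarrow> real"
    and L :: "('a \<times> 'b) cmat \<Rightarrow> ('c \<Rightarrow> real) \<Rightarrow> real"
    and r_best r_SDP :: ereal
  assumes pure_g: "pure_state xig" and pure_t: "pure_state xit"
    and W_nonneg: "\<forall>\<rho>. density \<rho> \<longrightarrow> 0 \<le> W \<rho>"
    and W_convex: "convex_on_states W"
    and P_povm: "povm P"
    and phi0: "\<phi>0 > 0" and phi1: "\<phi>1 \<ge> 0"
    and qhon: "prob_dist qhon"
    and r_best_def: "r_best = Sup {ereal (dotv g qhon + k - T_hat \<phi>0 \<phi>1 g) | g k.
                                     cross_mtf W P xig xit g k}"
    and L_affine: "affine_fun L"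
    and L_le: "\<forall>(J :: ('x \<times> 'b) cmat) \<nu>. choi J \<longrightarrow>
                 L (rhoJ xig J) \<nu> \<le> W (rhoJ xig J) + s_fun \<phi>0 \<phi>1 ((\<Sum>c\<in>UNIV. \<nu> c) / 2)"
    and r_SDP_def: "r_SDP = Inf {ereal (L (rhoJ xig J) \<nu>) | (J :: ('x \<times> 'b) cmat) lam \<nu>.
                       choi J \<and> (\<forall>c. qhon c - Phi P (rhoJ xit J) c - lam c = 0)
                       \<and> (\<forall>c. - \<nu> c \<le> lam c \<and> lam c \<le> \<nu> c)}"
    and r_SDP_finite: "\<bar>r_SDP\<bar> \<noteq> \<infinity>"
  shows
    "r_best = Inf {ereal (W (rhoJ xig J)) + T_star \<phi>0 \<phi>1 lam | (J :: ('x \<times> 'b) cmat) lam.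
                     choi J \<and> (\<forall>c. qhon c - Phi P (rhoJ xit J) c - lam c = 0)}
     \<and> r_best = Inf {ereal (W (rhoJ xig J) + s_fun \<phi>0 \<phi>1 ((\<Sum>c\<in>UNIV. \<nu> c) / 2))
                     | (J :: ('x \<times> 'b) cmat) lam \<nu>.
                     choi J \<and> (\<forall>c. qhon c - Phi P (rhoJ xit J) c - lam c = 0)
                     \<and> (\<forall>c. - \<nu> c \<le> lam c \<and> lam c \<le> \<nu> c)}
     \<and> (\<exists>gs. r_SDP = Inf {ereal (L (rhoJ xig J) \<nu>
                              + dotv gs (\<lambda>c. qhon c - Phi P (rhoJ xit J) c - lam c))
                           | (J :: ('x \<times> 'b) cmat) lam \<nu>.
                           choi J \<and> (\<forall>c. - \<nu> c \<le> lam c \<and> lam c \<le> \<nu> c)})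
     \<and> (\<forall>gs. r_SDP = Inf {ereal (L (rhoJ xig J) \<nu>
                              + dotv gs (\<lambda>c. qhon c - Phi P (rhoJ xit J) c - lam c))
                           | (J :: ('x \<times> 'b) cmat) lam \<nu>.
                           choi J \<and> (\<forall>c. - \<nu> c \<le> lam c \<and> lam c \<le> \<nu> c)}
            \<longrightarrow> (\<exists>k. cross_mtf W P xig xit gs k
                     \<and> ereal (dotv gs qhon + k - T_hat \<phi>0 \<phi>1 gs) \<ge> r_SDP))"
proof -
  interpret sdp_relaxation W P xig xit \<phi>0 \<phi>1 qhon L
    using assms by unfold_locales auto
  have r_SDP: "r_SDP = r_sdp" unfolding r_SDP_def r_sdp_def residual_def ..
  have "r_best = r_primal" unfolding r_best_def by (rule best_crossover_rate_eq_r_primal)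
  moreover note Inf_T_star_eq_r_primal Inf_relaxed_eq_r_primal
  moreover have "\<exists>gs. r_SDP = sdp_lagrangian gs"
    using sdp_multiplier_exists r_SDP_finite unfolding r_SDP .
  moreover have "\<forall>gs. r_SDP = sdp_lagrangian gs \<longrightarrow>
      (\<exists>k. cross_mtf W P xig xit gs k \<and> r_SDP \<le> ereal (dotv gs qhon + k - T_hat \<phi>0 \<phi>1 gs))"
    using r_SDP_finite unfolding r_SDP by (intro allI impI crossover_of_sdp_multiplier)
  ultimately show ?thesis unfolding sdp_lagrangian_def residual_def by simp
qed

end
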